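(* Let $\Omega\subseteq\mathbb{R}^n$ be a domain and $\Psi:\Omega\to\mathbb{R}$ a strongly convex function bounded in $C^4$ (defining the Hessian metric $g=\sum\Psi_{ij}dx_idx_j$). Then there exists $\epsilon_0>0$ such that every Euclidean ball $B(p,\epsilon)\subseteq\Omega$ with $p\in\Omega$ and $\epsilon<\epsilon_0$ (in the primal coordinates $x$) is convex when expressed in the dual coordinates $\theta=\nabla\Psi$, i.e. $\nabla\Psi(B(p,\epsilon))$ is a convex subset of $\mathbb{R}^n$.
   Context: Strongly convex: the Hessian of $\Psi$ is bounded below by a positive multiple of the identity. Bounded in $C^4$: all partial derivatives of $\Psi$ up to order 4 are uniformly bounded on $\Omega$. Dual coordinates: $\theta^i=\partial\Psi/\partial x^i$. *)

theory Defs
  imports "HOL-Analysis.Analysis"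
begin

fun iter_partial :: "'a::euclidean_space list \<Rightarrow> ('a \<Rightarrow> real) \<Rightarrow> 'a \<Rightarrow> real" where
  "iter_partial [] f = f"
| "iter_partial (i # is) f = (\<lambda>x. frechet_derivative (iter_partial is f) (at x) i)"

definition Ck_on :: "nat \<Rightarrow> 'a::euclidean_space set \<Rightarrow> ('a \<Rightarrow> real) \<Rightarrow> bool" where
  "Ck_on k S f \<longleftrightarrow>
     (\<forall>is. set is \<subseteq> Basis \<and> length is < k \<longrightarrow> iter_partial is f differentiable_on S) \<and>
     (\<forall>is. set is \<subseteq> Basis \<and> length is \<le> k \<longrightarrow> continuous_on S (iter_partial is f))"

definition bounded_Ck_on :: "nat \<Rightarrow> 'a::euclidean_space set \<Rightarrow> ('a \<Rightarrow> real) \<Rightarrow> bool" where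
  "bounded_Ck_on k S f \<longleftrightarrow> Ck_on k S f \<and>
     (\<exists>M. \<forall>is. set is \<subseteq> Basis \<and> length is \<le> k \<longrightarrow> (\<forall>x\<in>S. \<bar>iter_partial is f x\<bar> \<le> M))"

definition hess_form :: "('a::euclidean_space \<Rightarrow> real) \<Rightarrow> 'a \<Rightarrow> 'a \<Rightarrow> real" where
  "hess_form f x v = (\<Sum>i\<in>Basis. \<Sum>j\<in>Basis. (v \<bullet> i) * (v \<bullet> j) * iter_partial [i, j] f x)"

definition strongly_convex_hess :: "'a::euclidean_space set \<Rightarrow> ('a \<Rightarrow> real) \<Rightarrow> bool" where
  "strongly_convex_hess S f \<longleftrightarrow>
     (\<exists>c>0. \<forall>x\<in>S. \<forall>v. hess_form f x v \<ge> c * (norm v)\<^sup>2)"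

definition grad :: "('a::euclidean_space \<Rightarrow> real) \<Rightarrow> 'a \<Rightarrow> 'a" where
  "grad f x = (\<Sum>i\<in>Basis. iter_partial [i] f x *\<^sub>R i)"

end

theory Submission
  imports Defs
begin

(* Fix theta = (1 - t) grad Psi x0 + t grad Psi x1 and minimise Psi z - theta . z over the closed
   ball cball p r. At a minimiser y, theta - grad Psi y lies in the normal cone of the ball, so a
   minimiser in the open ball gives theta = grad Psi y. A minimiser on the sphere is impossible:
   there theta - grad Psi y = mu (y - p) with mu >= 0 and, for the solution n of the transposed
   equation (D grad Psi y)^T n = y - p, the first-order Taylor estimate with a K-Lipschitz Hessian
   puts grad Psi ` ball p r, hence also its convex combination theta, into the open half-space
   (eta - grad Psi y) . n < 0 as soon as 2 K r <= c (c the strong convexity constant), whereas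
   (y - p) . n >= 0. Strong convexity and bounded third derivatives make c and K uniform on Omega. *)

lemma has_derivative_min_on_convex_nonneg:
  fixes f :: "'a::real_normed_vector \<Rightarrow> real"
  assumes "convex S" "y \<in> S" "x \<in> S"
    and deriv: "(f has_derivative f') (at y)"
    and minimum: "\<And>z. z \<in> S \<Longrightarrow> f y \<le> f z"
  shows "f' (x - y) \<ge> 0"
proof (rule ccontr)
  assume "\<not> f' (x - y) \<ge> 0"
  then have "f' (x - y) < 0"
    by simp
  have "((\<lambda>s. y + s *\<^sub>R (x - y)) has_derivative (\<lambda>s. s *\<^sub>R (x - y))) (at 0)"
    by (intro derivative_eq_intros) auto
  then have "((\<lambda>s. f (y + s *\<^sub>R (x - y))) has_derivative (\<lambda>s. f' (s *\<^sub>R (x - y)))) (at 0)"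
    by (rule has_derivative_compose) (simp add: deriv)
  then have line: "((\<lambda>s. f (y + s *\<^sub>R (x - y))) has_real_derivative f' (x - y)) (at 0)"
    using has_derivative_linear[OF deriv]
    by (simp add: has_field_derivative_def linear_scale mult_commute_abs)
  from DERIV_neg_dec_right[OF line \<open>f' (x - y) < 0\<close>] obtain d where "d > 0"
    and dec: "\<And>h. 0 < h \<Longrightarrow> h < d \<Longrightarrow> f (y + h *\<^sub>R (x - y)) < f y"
    by auto
  define h where "h = min (d / 2) 1"
  have h: "0 < h" "h < d" "h \<le> 1"
    using \<open>d > 0\<close> by (auto simp: h_def)
  have "y + h *\<^sub>R (x - y) = (1 - h) *\<^sub>R y + h *\<^sub>R x"
    by (simp add: algebra_simps)
  then have "y + h *\<^sub>R (x - y) \<in> S"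
    using convexD_alt[OF assms(1-3), of h] h by simp
  then show False
    using minimum dec[OF h(1,2)] by fastforce
qed

lemma cball_normal_cone:
  fixes p y w :: "'a::real_inner"
  assumes "r > 0" "y \<in> cball p r"
    and normal: "\<And>x. x \<in> cball p r \<Longrightarrow> w \<bullet> (x - y) \<le> 0"
  shows "\<exists>\<mu>\<ge>0. w = \<mu> *\<^sub>R (y - p)" and "w \<noteq> 0 \<Longrightarrow> dist p y = r"
proof -
  have outward: "dist p y = r \<and> w = (norm w / r) *\<^sub>R (y - p)" if "w \<noteq> 0"
  proof -
    have "p + (r / norm w) *\<^sub>R w \<in> cball p r"
      using assms by (simp add: dist_norm)
    from normal[OF this] have lower: "r * norm w \<le> w \<bullet> (y - p)"
      using \<open>w \<noteq> 0\<close> by (simp add: inner_diff_right inner_add_right dot_square_norm power2_eq_square)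
    have upper: "w \<bullet> (y - p) \<le> norm w * norm (y - p)"
      by (rule norm_cauchy_schwarz)
    have "norm w * r \<le> norm w * norm (y - p)"
      using lower upper by (simp add: mult.commute)
    then have "r \<le> norm (y - p)"
      using \<open>w \<noteq> 0\<close> by simp
    moreover have "norm (y - p) \<le> r"
      using \<open>y \<in> cball p r\<close> by (simp add: dist_norm norm_minus_commute)
    ultimately have "norm (y - p) = r"
      by simp
    then have "w \<bullet> (y - p) = norm w * norm (y - p)"
      using lower upper by (simp add: mult.commute)
    then have "norm w *\<^sub>R (y - p) = r *\<^sub>R w"
      using norm_cauchy_schwarz_eq[of w "y - p"] \<open>norm (y - p) = r\<close> by simp
    then have "(1 / r) *\<^sub>R (norm w *\<^sub>R (y - p)) = (1 / r) *\<^sub>R (r *\<^sub>R w)"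
      by simp
    then show ?thesis
      using \<open>r > 0\<close> \<open>norm (y - p) = r\<close> by (simp add: dist_norm norm_minus_commute)
  qed
  show "\<exists>\<mu>\<ge>0. w = \<mu> *\<^sub>R (y - p)"
  proof (cases "w = 0")
    case True
    then show ?thesis
      by (intro exI[of _ 0]) simp
  next
    case False
    then show ?thesis
      using outward \<open>r > 0\<close> by (intro exI[of _ "norm w / r"]) simp
  qed
  show "w \<noteq> 0 \<Longrightarrow> dist p y = r"
    using outward by blast
qed

lemma coercive_linear_adjoint_solvable:
  fixes A :: "'a::euclidean_space \<Rightarrow> 'a"
  assumes "linear A" "c > 0" and coercive: "\<And>v. c * (norm v)\<^sup>2 \<le> v \<bullet> A v"
  obtains n where "\<And>v. A v \<bullet> n = v \<bullet> u" and "c * (norm n)\<^sup>2 \<le> u \<bullet> n" and "c * norm n \<le> norm u"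
proof -
  have "linear (adjoint A)"
    using \<open>linear A\<close> adjoint_linear by blast
  moreover have "inj (adjoint A)"
    unfolding linear_injective_0[OF \<open>linear (adjoint A)\<close>]
  proof (intro allI impI)
    fix n assume "adjoint A n = 0"
    then have "n \<bullet> A n = 0"
      using adjoint_works[OF \<open>linear A\<close>, of n n] by (simp add: inner_commute)
    then show "n = 0"
      using coercive[of n] \<open>c > 0\<close> by (simp add: mult_le_0_iff)
  qed
  ultimately obtain n where "adjoint A n = u"
    using linear_injective_imp_surjective by (metis surjD)
  then have solution: "A v \<bullet> n = v \<bullet> u" for v
    using adjoint_works[OF \<open>linear A\<close>] by metis
  have "c * (norm n)\<^sup>2 \<le> u \<bullet> n"
    using coercive[of n] solution[of n] by (simp add: inner_commute)
  moreover have "c * norm n \<le> norm u"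
  proof (cases "n = 0")
    case False
    have "c * norm n * norm n \<le> norm u * norm n"
      using \<open>c * (norm n)\<^sup>2 \<le> u \<bullet> n\<close> norm_cauchy_schwarz[of u n] by (simp add: power2_eq_square)
    with False show ?thesis
      by simp
  qed simp
  ultimately show ?thesis
    using solution that by blast
qed

lemma has_derivative_lipschitz_remainder_bound:
  fixes F :: "'a::{real_normed_vector, perfect_space} \<Rightarrow> 'b::real_normed_vector"
  assumes "convex S" "x \<in> S" "y \<in> S" "K \<ge> 0"
    and deriv: "\<And>z. z \<in> S \<Longrightarrow> (F has_derivative L z) (at z within S)"
    and lip: "\<And>z v. z \<in> S \<Longrightarrow> norm (L z v - L y v) \<le> K * norm (z - y) * norm v"
  shows "norm (F x - F y - L y (x - y)) \<le> K * (norm (x - y))\<^sup>2"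
proof -
  have "linear (L y)"
    using deriv[OF \<open>y \<in> S\<close>] has_derivative_linear by blast
  define T where "T = closed_segment y x"
  have "T \<subseteq> S"
    using assms(1-3) by (simp add: T_def closed_segment_subset)
  have "((\<lambda>z. F z - L y z) has_derivative (\<lambda>v. L z v - L y v)) (at z within T)" if "z \<in> T" for z
    using deriv[of z] that \<open>T \<subseteq> S\<close> has_derivative_bounded_linear[OF deriv[OF \<open>y \<in> S\<close>]]
    by (intro has_derivative_diff bounded_linear_imp_has_derivative) (auto intro: has_derivative_subset)
  moreover have "onorm (\<lambda>v. L z v - L y v) \<le> K * norm (x - y)" if "z \<in> T" for z
  proof (rule onorm_le)
    fix v
    have "norm (z - y) \<le> norm (x - y)"
      using segment_bound1[of z y x] that by (simp add: T_def)
    then show "norm (L z v - L y v) \<le> K * norm (x - y) * norm v"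
      using lip[of z v] that \<open>T \<subseteq> S\<close> \<open>K \<ge> 0\<close>
      by (meson mult_right_mono mult_left_mono norm_ge_zero order_trans subsetD)
  qed
  ultimately have "norm ((F x - L y x) - (F y - L y y)) \<le> K * norm (x - y) * norm (x - y)"
    by (intro differentiable_bound[of T]) (auto simp: T_def)
  moreover have "(F x - L y x) - (F y - L y y) = F x - F y - L y (x - y)"
    using \<open>linear (L y)\<close> by (simp add: linear_diff algebra_simps)
  ultimately show ?thesis
    by (simp add: power2_eq_square mult.assoc)
qed

lemma inner_chord_from_sphere_less:
  fixes p x y :: "'a::real_inner"
  assumes "norm (y - p) = r" "norm (x - p) < r"
  shows "(x - y) \<bullet> (y - p) < - (norm (x - y))\<^sup>2 / 2"
proof -
  have "(norm (x - p))\<^sup>2 < r\<^sup>2"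
    using assms power_strict_mono[of "norm (x - p)" r 2] by simp
  then show ?thesis
    using dot_norm[of "x - y" "y - p"] assms(1) by simp
qed

lemma image_ball_in_open_halfspace:
  fixes F :: "'a::euclidean_space \<Rightarrow> 'a" and L :: "'a \<Rightarrow> 'a \<Rightarrow> 'a"
  assumes deriv: "\<And>z. z \<in> cball p r \<Longrightarrow> (F has_derivative L z) (at z within cball p r)"
    and coercive: "\<And>v. c * (norm v)\<^sup>2 \<le> v \<bullet> L y v"
    and lip: "\<And>z v. z \<in> cball p r \<Longrightarrow> norm (L z v - L y v) \<le> K * norm (z - y) * norm v"
    and "c > 0" "K \<ge> 0" "2 * K * r \<le> c"
    and "dist p y = r"
  obtains n where "(y - p) \<bullet> n \<ge> 0" and "\<And>x. x \<in> ball p r \<Longrightarrow> (F x - F y) \<bullet> n < 0"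
proof -
  have "y \<in> cball p r" and norm_y: "norm (y - p) = r"
    using \<open>dist p y = r\<close> by (auto simp: dist_norm norm_minus_commute)
  then have "linear (L y)"
    using deriv has_derivative_linear by blast
  then obtain n where n: "\<And>v. L y v \<bullet> n = v \<bullet> (y - p)"
    and "c * (norm n)\<^sup>2 \<le> (y - p) \<bullet> n" and "c * norm n \<le> r"
    using coercive_linear_adjoint_solvable[OF _ \<open>c > 0\<close> coercive] norm_y by metis
  then have "2 * K * norm n * c \<le> 1 * c"
    using \<open>K \<ge> 0\<close> \<open>2 * K * r \<le> c\<close> mult_left_mono[of "c * norm n" r "2 * K"]
    by (simp add: mult.commute mult.left_commute)
  then have half: "K * norm n \<le> 1 / 2"
    using \<open>c > 0\<close> by simp
  show ?thesis
  proof
    have "0 \<le> c * (norm n)\<^sup>2"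
      using \<open>c > 0\<close> by simp
    then show "(y - p) \<bullet> n \<ge> 0"
      using \<open>c * (norm n)\<^sup>2 \<le> (y - p) \<bullet> n\<close> by linarith
  next
    fix x assume "x \<in> ball p r"
    then have "x \<in> cball p r" and "norm (x - p) < r"
      by (auto simp: dist_norm norm_minus_commute)
    have "(F x - F y - L y (x - y)) \<bullet> n \<le> norm (F x - F y - L y (x - y)) * norm n"
      by (rule norm_cauchy_schwarz)
    also have "\<dots> \<le> K * (norm (x - y))\<^sup>2 * norm n"
      using has_derivative_lipschitz_remainder_bound[OF convex_cball \<open>x \<in> cball p r\<close>
          \<open>y \<in> cball p r\<close> \<open>K \<ge> 0\<close> deriv lip]
      by (simp add: mult_right_mono)
    also have "\<dots> \<le> (norm (x - y))\<^sup>2 / 2"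
      using mult_right_mono[OF half, of "(norm (x - y))\<^sup>2"] by (simp add: mult_ac)
    finally have "(F x - F y - L y (x - y)) \<bullet> n \<le> (norm (x - y))\<^sup>2 / 2" .
    moreover have "(F x - F y) \<bullet> n = (F x - F y - L y (x - y)) \<bullet> n + (x - y) \<bullet> (y - p)"
      using n[of "x - y"] by (simp add: inner_diff_left)
    ultimately show "(F x - F y) \<bullet> n < 0"
      using inner_chord_from_sphere_less[OF norm_y \<open>norm (x - p) < r\<close>] by linarith
  qed
qed

lemma gradient_normal_cone_point_cball:
  fixes \<Psi> :: "'a::euclidean_space \<Rightarrow> real" and F :: "'a \<Rightarrow> 'a"
  assumes "r \<ge> 0"
    and gradient: "\<And>z. z \<in> cball p r \<Longrightarrow> (\<Psi> has_derivative (\<lambda>v. F z \<bullet> v)) (at z)"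
  obtains y where "y \<in> cball p r" and "\<And>x. x \<in> cball p r \<Longrightarrow> (\<theta> - F y) \<bullet> (x - y) \<le> 0"
proof -
  have "continuous_on (cball p r) \<Psi>"
    using gradient by (meson continuous_at_imp_continuous_on has_derivative_continuous)
  then have "continuous_on (cball p r) (\<lambda>z. \<Psi> z - \<theta> \<bullet> z)"
    by (intro continuous_intros)
  then obtain y where "y \<in> cball p r"
    and minimum: "\<And>z. z \<in> cball p r \<Longrightarrow> \<Psi> y - \<theta> \<bullet> y \<le> \<Psi> z - \<theta> \<bullet> z"
    using continuous_attains_inf[of "cball p r"] \<open>r \<ge> 0\<close> by force
  have deriv: "((\<lambda>z. \<Psi> z - \<theta> \<bullet> z) has_derivative (\<lambda>v. F y \<bullet> v - \<theta> \<bullet> v)) (at y)"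
    using gradient[OF \<open>y \<in> cball p r\<close>] by (auto intro!: derivative_eq_intros)
  have "(\<theta> - F y) \<bullet> (x - y) \<le> 0" if "x \<in> cball p r" for x
    using has_derivative_min_on_convex_nonneg[OF convex_cball \<open>y \<in> cball p r\<close> that deriv minimum]
    by (simp add: inner_diff_left)
  with \<open>y \<in> cball p r\<close> show ?thesis
    by (rule that)
qed

lemma convex_gradient_image_ball:
  fixes \<Psi> :: "'a::euclidean_space \<Rightarrow> real" and F :: "'a \<Rightarrow> 'a" and L :: "'a \<Rightarrow> 'a \<Rightarrow> 'a"
  assumes "r > 0"
    and gradient: "\<And>z. z \<in> cball p r \<Longrightarrow> (\<Psi> has_derivative (\<lambda>v. F z \<bullet> v)) (at z)"
    and deriv: "\<And>z. z \<in> cball p r \<Longrightarrow> (F has_derivative L z) (at z)"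
    and coercive: "\<And>z v. z \<in> cball p r \<Longrightarrow> c * (norm v)\<^sup>2 \<le> v \<bullet> L z v"
    and lip: "\<And>z y v. z \<in> cball p r \<Longrightarrow> y \<in> cball p r \<Longrightarrow>
                norm (L z v - L y v) \<le> K * norm (z - y) * norm v"
    and "c > 0" "K \<ge> 0" "2 * K * r \<le> c"
  shows "convex (F ` ball p r)"
proof -
  have "(1 - t) *\<^sub>R F x0 + t *\<^sub>R F x1 \<in> F ` ball p r"
    if "x0 \<in> ball p r" "x1 \<in> ball p r" "0 \<le> t" "t \<le> 1" for x0 x1 t
  proof -
    define \<theta> where "\<theta> = (1 - t) *\<^sub>R F x0 + t *\<^sub>R F x1"
    obtain y where "y \<in> cball p r" and normal: "\<And>x. x \<in> cball p r \<Longrightarrow> (\<theta> - F y) \<bullet> (x - y) \<le> 0"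
      using gradient_normal_cone_point_cball[OF less_imp_le[OF \<open>r > 0\<close>] gradient, where \<theta> = \<theta>] by blast
    show ?thesis
    proof (cases "y \<in> ball p r")
      case True
      then have "\<theta> = F y"
        using cball_normal_cone(2)[OF \<open>r > 0\<close> \<open>y \<in> cball p r\<close> normal] by force
      with True show ?thesis
        by (simp add: \<theta>_def)
    next
      case False
      then have "dist p y = r"
        using \<open>y \<in> cball p r\<close> by simp
      obtain \<mu> where "\<mu> \<ge> 0" and \<mu>: "\<theta> - F y = \<mu> *\<^sub>R (y - p)"
        using cball_normal_cone(1)[OF \<open>r > 0\<close> \<open>y \<in> cball p r\<close> normal] by blast
      have "\<And>x. x \<in> cball p r \<Longrightarrow> (F has_derivative L x) (at x within cball p r)"
        using deriv has_derivative_at_withinI by blast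
      then obtain n where "(y - p) \<bullet> n \<ge> 0" and below: "\<And>x. x \<in> ball p r \<Longrightarrow> (F x - F y) \<bullet> n < 0"
        using image_ball_in_open_halfspace[of p r F L c y K] coercive lip \<open>y \<in> cball p r\<close>
          \<open>c > 0\<close> \<open>K \<ge> 0\<close> \<open>2 * K * r \<le> c\<close> \<open>dist p y = r\<close> by blast
      have "(\<theta> - F y) \<bullet> n = (1 - t) * ((F x0 - F y) \<bullet> n) + t * ((F x1 - F y) \<bullet> n)"
        by (simp add: \<theta>_def algebra_simps inner_diff_left)
      also have "\<dots> < 0"
        using below that by (intro convex_bound_lt) auto
      finally have "\<mu> * ((y - p) \<bullet> n) < 0"
        by (simp add: \<mu>)
      with \<open>\<mu> \<ge> 0\<close> \<open>(y - p) \<bullet> n \<ge> 0\<close> show ?thesis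
        by (simp add: mult_less_0_iff)
    qed
  qed
  then show ?thesis
    unfolding convex_alt by blast
qed

lemma convex_image_ball_if_convex_image_smaller_balls:
  fixes f :: "'a::metric_space \<Rightarrow> 'b::real_vector"
  assumes "\<And>r. 0 < r \<Longrightarrow> r < \<epsilon> \<Longrightarrow> convex (f ` ball p r)"
  shows "convex (f ` ball p \<epsilon>)"
  unfolding convex_alt
proof (intro ballI allI impI)
  fix a b and t :: real
  assume "a \<in> f ` ball p \<epsilon>" "b \<in> f ` ball p \<epsilon>" "0 \<le> t \<and> t \<le> 1"
  then obtain x0 x1 where x: "x0 \<in> ball p \<epsilon>" "x1 \<in> ball p \<epsilon>" "a = f x0" "b = f x1"
    by blast
  define r where "r = (max (dist p x0) (dist p x1) + \<epsilon>) / 2"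
  have "0 \<le> max (dist p x0) (dist p x1)" "max (dist p x0) (dist p x1) < \<epsilon>"
    using x(1,2) by (auto simp: le_max_iff_disj)
  then have "0 < r" "r < \<epsilon>" "x0 \<in> ball p r" "x1 \<in> ball p r"
    by (auto simp: r_def)
  then have "(1 - t) *\<^sub>R a + t *\<^sub>R b \<in> f ` ball p r"
    using assms[of r] \<open>0 \<le> t \<and> t \<le> 1\<close> x(3,4) by (simp add: convex_alt)
  moreover have "f ` ball p r \<subseteq> f ` ball p \<epsilon>"
    using \<open>r < \<epsilon>\<close> by (intro image_mono subset_ball) simp
  ultimately show "(1 - t) *\<^sub>R a + t *\<^sub>R b \<in> f ` ball p \<epsilon>"
    by blast
qed

lemma Ck_on_mono: "Ck_on m S f \<Longrightarrow> k \<le> m \<Longrightarrow> Ck_on k S f"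
  unfolding Ck_on_def by auto

lemma Ck_on_differentiable_on:
  "Ck_on k S f \<Longrightarrow> set is \<subseteq> Basis \<Longrightarrow> length is < k \<Longrightarrow> iter_partial is f differentiable_on S"
  unfolding Ck_on_def by blast

lemma abs_sum_inner_Basis_le:
  fixes v :: "'a::euclidean_space" and M :: real
  assumes "\<And>i. i \<in> Basis \<Longrightarrow> \<bar>a i\<bar> \<le> M"
  shows "\<bar>\<Sum>i\<in>Basis. (v \<bullet> i) * a i\<bar> \<le> real DIM('a) * M * norm v"
proof -
  have "\<bar>\<Sum>i\<in>Basis. (v \<bullet> i) * a i\<bar> \<le> (\<Sum>i\<in>Basis. \<bar>(v \<bullet> i) * a i\<bar>)"
    by (rule sum_abs)
  also have "\<dots> \<le> (\<Sum>i\<in>(Basis::'a set). norm v * M)"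
  proof (intro sum_mono)
    fix i :: 'a assume "i \<in> Basis"
    then show "\<bar>(v \<bullet> i) * a i\<bar> \<le> norm v * M"
      unfolding abs_mult using assms Basis_le_norm by (intro mult_mono) auto
  qed
  finally show ?thesis
    by (simp add: mult_ac)
qed

lemma iter_partial_has_derivative:
  fixes f :: "'a::euclidean_space \<Rightarrow> real"
  assumes "iter_partial is f differentiable_on S" "open S" "x \<in> S"
  shows "(iter_partial is f has_derivative
           (\<lambda>v. \<Sum>i\<in>Basis. (v \<bullet> i) * iter_partial (i # is) f x)) (at x)"
proof -
  let ?D = "frechet_derivative (iter_partial is f) (at x)"
  have "iter_partial is f differentiable (at x)"
    using assms differentiable_on_eq_differentiable_at by blast
  then have D: "(iter_partial is f has_derivative ?D) (at x)" and "linear ?D"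
    by (simp_all add: frechet_derivative_works linear_frechet_derivative)
  have "?D v = (\<Sum>i\<in>Basis. (v \<bullet> i) * iter_partial (i # is) f x)" for v
    using Linear_Algebra.linear_componentwise[OF \<open>linear ?D\<close>, of v 1] by simp
  then have "?D = (\<lambda>v. \<Sum>i\<in>Basis. (v \<bullet> i) * iter_partial (i # is) f x)"
    by (rule ext)
  with D show ?thesis
    by (simp only:)
qed

lemma iter_partial_lipschitz_on_convex:
  fixes f :: "'a::euclidean_space \<Rightarrow> real" and M :: real
  assumes "iter_partial is f differentiable_on S" "open S" "convex T" "T \<subseteq> S"
    and bound: "\<And>i x. i \<in> Basis \<Longrightarrow> x \<in> T \<Longrightarrow> \<bar>iter_partial (i # is) f x\<bar> \<le> M"
    and "z \<in> T" "y \<in> T"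
  shows "\<bar>iter_partial is f z - iter_partial is f y\<bar> \<le> real DIM('a) * M * norm (z - y)"
proof -
  have "norm (iter_partial is f z - iter_partial is f y) \<le> real DIM('a) * M * norm (z - y)"
  proof (rule differentiable_bound[OF \<open>convex T\<close> _ _ \<open>z \<in> T\<close> \<open>y \<in> T\<close>])
    fix x assume "x \<in> T"
    then show "(iter_partial is f has_derivative
                 (\<lambda>v. \<Sum>i\<in>Basis. (v \<bullet> i) * iter_partial (i # is) f x)) (at x within T)"
      using \<open>T \<subseteq> S\<close>
      by (intro has_derivative_at_withinI[OF iter_partial_has_derivative[OF assms(1,2)]]) blast
    show "onorm (\<lambda>v. \<Sum>i\<in>Basis. (v \<bullet> i) * iter_partial (i # is) f x) \<le> real DIM('a) * M"
    proof (rule onorm_le)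
      fix v :: 'a
      have "\<bar>\<Sum>i\<in>Basis. (v \<bullet> i) * iter_partial (i # is) f x\<bar> \<le> real DIM('a) * M * norm v"
        by (rule abs_sum_inner_Basis_le) (rule bound[OF _ \<open>x \<in> T\<close>])
      then show "norm (\<Sum>i\<in>Basis. (v \<bullet> i) * iter_partial (i # is) f x) \<le> real DIM('a) * M * norm v"
        by (simp only: real_norm_def)
    qed
  qed
  then show ?thesis
    by simp
qed

lemma has_derivative_grad:
  assumes "Ck_on 1 S f" "open S" "x \<in> S"
  shows "(f has_derivative (\<lambda>v. grad f x \<bullet> v)) (at x)"
proof -
  have "iter_partial [] f differentiable_on S"
    using Ck_on_differentiable_on[OF \<open>Ck_on 1 S f\<close>, of "[]"] by simp
  moreover have "(\<lambda>v. \<Sum>i\<in>Basis. (v \<bullet> i) * iter_partial [i] f x) = (\<lambda>v. grad f x \<bullet> v)"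
    unfolding grad_def fun_eq_iff inner_sum_left by (auto intro!: sum.cong simp: inner_commute)
  ultimately show ?thesis
    using iter_partial_has_derivative[OF _ assms(2,3)] by fastforce
qed

(* The derivative of grad f at x. *)
definition hessian :: "('a::euclidean_space \<Rightarrow> real) \<Rightarrow> 'a \<Rightarrow> 'a \<Rightarrow> 'a" where
  "hessian f x v = (\<Sum>j\<in>Basis. (\<Sum>i\<in>Basis. (v \<bullet> i) * iter_partial [i, j] f x) *\<^sub>R j)"

lemma grad_has_derivative_hessian:
  assumes "Ck_on 2 S f" "open S" "x \<in> S"
  shows "(grad f has_derivative hessian f x) (at x)"
proof -
  have "(iter_partial [j] f has_derivative (\<lambda>v. \<Sum>i\<in>Basis. (v \<bullet> i) * iter_partial [i, j] f x)) (at x)"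
    if "j \<in> Basis" for j
    using iter_partial_has_derivative[OF Ck_on_differentiable_on[OF \<open>Ck_on 2 S f\<close>, of "[j]"] assms(2,3)]
      that by simp
  then have "((\<lambda>x. \<Sum>j\<in>Basis. iter_partial [j] f x *\<^sub>R j) has_derivative
      (\<lambda>v. \<Sum>j\<in>Basis. (\<Sum>i\<in>Basis. (v \<bullet> i) * iter_partial [i, j] f x) *\<^sub>R j)) (at x)"
    by (intro has_derivative_sum has_derivative_scaleR_left)
  moreover have "grad f = (\<lambda>x. \<Sum>j\<in>Basis. iter_partial [j] f x *\<^sub>R j)"
    and "hessian f x = (\<lambda>v. \<Sum>j\<in>Basis. (\<Sum>i\<in>Basis. (v \<bullet> i) * iter_partial [i, j] f x) *\<^sub>R j)"
    by (simp_all only: fun_eq_iff grad_def hessian_def) simp_all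
  ultimately show ?thesis
    by (simp only:)
qed

lemma inner_hessian: "v \<bullet> hessian f x v = hess_form f x v"
proof -
  have "v \<bullet> hessian f x v = (\<Sum>j\<in>Basis. \<Sum>i\<in>Basis. (v \<bullet> i) * (v \<bullet> j) * iter_partial [i, j] f x)"
    unfolding hessian_def by (simp add: inner_sum_right sum_distrib_left mult_ac)
  also have "\<dots> = hess_form f x v"
    unfolding hess_form_def by (rule sum.swap)
  finally show ?thesis .
qed

lemma hessian_lipschitz_on_convex:
  fixes f :: "'a::euclidean_space \<Rightarrow> real" and M :: real
  assumes "Ck_on 3 S f" "open S" "convex T" "T \<subseteq> S"
    and bound: "\<And>i j k x. i \<in> Basis \<Longrightarrow> j \<in> Basis \<Longrightarrow> k \<in> Basis \<Longrightarrow> x \<in> T \<Longrightarrow>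
                  \<bar>iter_partial [k, i, j] f x\<bar> \<le> M"
    and "z \<in> T" "y \<in> T"
  shows "norm (hessian f z v - hessian f y v) \<le> real DIM('a) ^ 3 * M * norm (z - y) * norm v"
proof -
  have second: "\<bar>iter_partial [i, j] f z - iter_partial [i, j] f y\<bar> \<le> real DIM('a) * M * norm (z - y)"
    if "i \<in> Basis" "j \<in> Basis" for i j
  proof (rule iter_partial_lipschitz_on_convex[OF _ assms(2-4) _ \<open>z \<in> T\<close> \<open>y \<in> T\<close>])
    show "iter_partial [i, j] f differentiable_on S"
      using Ck_on_differentiable_on[OF \<open>Ck_on 3 S f\<close>, of "[i, j]"] that by simp
  qed (use bound that in auto)
  have "hessian f z v - hessian f y v =
      (\<Sum>j\<in>Basis. (\<Sum>i\<in>Basis. (v \<bullet> i) * (iter_partial [i, j] f z - iter_partial [i, j] f y)) *\<^sub>R j)"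
    by (simp add: hessian_def sum_subtractf[symmetric] scaleR_diff_left[symmetric] right_diff_distrib)
  also have "norm \<dots> \<le> (\<Sum>j\<in>(Basis::'a set). real DIM('a) * (real DIM('a) * M * norm (z - y)) * norm v)"
    using abs_sum_inner_Basis_le[OF second]
    by (intro order_trans[OF norm_sum] sum_mono) simp
  also have "\<dots> = real DIM('a) ^ 3 * M * norm (z - y) * norm v"
    by (simp add: power3_eq_cube mult_ac)
  finally show ?thesis .
qed

lemma convex_grad_image_ball:
  fixes \<Psi> :: "'a::euclidean_space \<Rightarrow> real" and M :: real
  assumes "open \<Omega>" "Ck_on 3 \<Omega> \<Psi>" "cball p r \<subseteq> \<Omega>" "r > 0" "c > 0" "M \<ge> 0"
    and hess: "\<And>x v. x \<in> cball p r \<Longrightarrow> c * (norm v)\<^sup>2 \<le> hess_form \<Psi> x v"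
    and third: "\<And>i j k x. i \<in> Basis \<Longrightarrow> j \<in> Basis \<Longrightarrow> k \<in> Basis \<Longrightarrow> x \<in> cball p r \<Longrightarrow>
                  \<bar>iter_partial [k, i, j] \<Psi> x\<bar> \<le> M"
    and "2 * (real DIM('a) ^ 3 * M) * r \<le> c"
  shows "convex (grad \<Psi> ` ball p r)"
proof (rule convex_gradient_image_ball[OF \<open>r > 0\<close> _ _ _ _ \<open>c > 0\<close> _ \<open>2 * _ * r \<le> c\<close>])
  fix z y v assume "z \<in> cball p r"
  then have "z \<in> \<Omega>"
    using \<open>cball p r \<subseteq> \<Omega>\<close> by blast
  show "(\<Psi> has_derivative (\<lambda>v. grad \<Psi> z \<bullet> v)) (at z)"
    using has_derivative_grad[OF Ck_on_mono[OF \<open>Ck_on 3 \<Omega> \<Psi>\<close>] \<open>open \<Omega>\<close> \<open>z \<in> \<Omega>\<close>] by simp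
  show "(grad \<Psi> has_derivative hessian \<Psi> z) (at z)"
    using grad_has_derivative_hessian[OF Ck_on_mono[OF \<open>Ck_on 3 \<Omega> \<Psi>\<close>] \<open>open \<Omega>\<close> \<open>z \<in> \<Omega>\<close>] by simp
  show "c * (norm v)\<^sup>2 \<le> v \<bullet> hessian \<Psi> z v"
    using hess[OF \<open>z \<in> cball p r\<close>] by (simp only: inner_hessian)
  assume "y \<in> cball p r"
  with \<open>z \<in> cball p r\<close> show "norm (hessian \<Psi> z v - hessian \<Psi> y v) \<le> real DIM('a) ^ 3 * M * norm (z - y) * norm v"
    by (intro hessian_lipschitz_on_convex[OF \<open>Ck_on 3 \<Omega> \<Psi>\<close> \<open>open \<Omega>\<close> convex_cball \<open>cball p r \<subseteq> \<Omega>\<close> third])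
qed (use \<open>M \<ge> 0\<close> in simp)

theorem mainTheorem5:
  fixes \<Omega> :: "'a::euclidean_space set" and \<Psi> :: "'a \<Rightarrow> real"
  assumes "open \<Omega>" and "connected \<Omega>" and "\<Omega> \<noteq> {}"
    and "strongly_convex_hess \<Omega> \<Psi>"
    and "bounded_Ck_on 4 \<Omega> \<Psi>"
  shows "\<exists>\<epsilon>0>0. \<forall>p\<in>\<Omega>. \<forall>\<epsilon>. 0 < \<epsilon> \<and> \<epsilon> < \<epsilon>0 \<and> ball p \<epsilon> \<subseteq> \<Omega>
           \<longrightarrow> convex (grad \<Psi> ` ball p \<epsilon>)"
proof -
  obtain c where "c > 0" and hess: "\<And>x v. x \<in> \<Omega> \<Longrightarrow> c * (norm v)\<^sup>2 \<le> hess_form \<Psi> x v"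
    using assms(4) unfolding strongly_convex_hess_def by blast
  obtain M where M: "\<And>is x. set is \<subseteq> Basis \<Longrightarrow> length is \<le> 4 \<Longrightarrow> x \<in> \<Omega> \<Longrightarrow> \<bar>iter_partial is \<Psi> x\<bar> \<le> M"
    and "Ck_on 4 \<Omega> \<Psi>"
    using assms(5) unfolding bounded_Ck_on_def by blast
  have "M \<ge> 0"
    using M[of "[]"] \<open>\<Omega> \<noteq> {}\<close> by force
  define K where "K = real DIM('a) ^ 3 * M"
  have "K \<ge> 0"
    using \<open>M \<ge> 0\<close> by (simp add: K_def)
  have "convex (grad \<Psi> ` ball p \<epsilon>)" if "\<epsilon> < c / (2 * K + 1)" "ball p \<epsilon> \<subseteq> \<Omega>" for p \<epsilon>
  proof (rule convex_image_ball_if_convex_image_smaller_balls)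
    fix r assume "0 < r" "r < \<epsilon>"
    have "2 * K * r \<le> 2 * K * \<epsilon>"
      using \<open>r < \<epsilon>\<close> \<open>K \<ge> 0\<close> by (intro mult_left_mono) auto
    moreover have "(2 * K + 1) * \<epsilon> < c"
      using that(1) \<open>K \<ge> 0\<close> by (simp add: field_simps)
    ultimately have "2 * K * r \<le> c"
      using \<open>0 < r\<close> \<open>r < \<epsilon>\<close> by (simp add: ring_distribs)
    moreover have "cball p r \<subseteq> \<Omega>"
      using that(2) \<open>0 < r\<close> \<open>r < \<epsilon>\<close> cball_subset_ball_iff[of p r p \<epsilon>] by auto
    ultimately show "convex (grad \<Psi> ` ball p r)"
      using convex_grad_image_ball[OF \<open>open \<Omega>\<close> Ck_on_mono[OF \<open>Ck_on 4 \<Omega> \<Psi>\<close>] _ \<open>0 < r\<close> \<open>c > 0\<close> \<open>M \<ge> 0\<close>]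
        hess M[of "[_, _, _]"] unfolding K_def by (simp add: subset_iff)
  qed
  moreover have "c / (2 * K + 1) > 0"
    using \<open>c > 0\<close> \<open>K \<ge> 0\<close> by simp
  ultimately show ?thesis
    by blast
qed

end
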